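(* For $\alpha\in[0,1]$ and $r>0$ let $$h(r,\alpha):=2\sqrt{\frac{2(1-\alpha/2)r}{1+\alpha+(1-\alpha/2)r}+\frac{r}{1+r}}+3-\frac{1}{r^2(1+r)}.$$ For each $\alpha\in(0,1)$ the equation $h(r,\alpha)=0$ has a unique positive root $r=r_{\star}(\alpha)$, and, denoting by $r_\star(0)$ and $r_\star(1)$ the positive roots of $h(r,0)=0$ and $h(r,1)=0$, it holds that $0.3865\approx r_{\star}(0)< r_{\star}(\alpha)< r_{\star}(1)\approx0.4037$ for all $\alpha\in(0,1)$. *)

theory Defs
  imports Complex_Main
begin

definition h :: "real \<Rightarrow> real \<Rightarrow> real" where
  "h r \<alpha> = 2 * sqrt (2 * (1 - \<alpha>/2) * r / (1 + \<alpha> + (1 - \<alpha>/2) * r) + r / (1 + r))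
              + 3 - 1 / (r^2 * (1 + r))"

end

theory Submission
  imports Defs
begin

(* For fixed alpha in [0,1], h r alpha is strictly increasing in r > 0: both terms under the
   square root increase, and so does -1/(r^2 (1+r)). It is negative at r = 3/10 and positive
   at r = 1, so the intermediate value theorem yields exactly one positive root. For fixed r,
   h is strictly decreasing in alpha, because (1 - alpha/2)/(1 + alpha) is; hence the root
   moves strictly to the right as alpha increases from 0 to 1. *)

definition h_ratio :: "real \<Rightarrow> real \<Rightarrow> real" where
  "h_ratio r \<alpha> = 2 * (1 - \<alpha>/2) * r / (1 + \<alpha> + (1 - \<alpha>/2) * r)"

lemma h_eq_h_ratio: "h r \<alpha> = 2 * sqrt (h_ratio r \<alpha> + r / (1 + r)) + 3 - 1 / (r^2 * (1 + r))"
  by (simp add: h_def h_ratio_def)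

lemma divide_affine_mono:
  fixes a b r s :: "'a::linordered_field"
  assumes "0 \<le> a" "0 < b" "0 \<le> r" "r \<le> s"
  shows "r / (b + a * r) \<le> s / (b + a * s)"
proof -
  have "0 < b + a * r" "0 < b + a * s"
    using assms by (simp_all add: add_pos_nonneg)
  moreover have "r * (b + a * s) \<le> s * (b + a * r)"
    using assms by (simp add: algebra_simps mult_left_mono)
  ultimately show ?thesis
    by (simp add: divide_simps)
qed

lemma h_ratio_mono:
  assumes "0 \<le> \<alpha>" "\<alpha> \<le> 1" "0 \<le> r" "r \<le> s"
  shows "h_ratio r \<alpha> \<le> h_ratio s \<alpha>"
proof -
  have "r / (1 + \<alpha> + (1 - \<alpha>/2) * r) \<le> s / (1 + \<alpha> + (1 - \<alpha>/2) * s)"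
    using assms by (intro divide_affine_mono) auto
  then have "(2 - \<alpha>) * (r / (1 + \<alpha> + (1 - \<alpha>/2) * r)) \<le> (2 - \<alpha>) * (s / (1 + \<alpha> + (1 - \<alpha>/2) * s))"
    using assms by (intro mult_left_mono) auto
  then show ?thesis
    unfolding h_ratio_def by simp
qed

lemma h_ratio_strict_antimono:
  assumes "0 \<le> \<alpha>" "\<alpha> < \<beta>" "\<beta> \<le> 1" "0 < r"
  shows "h_ratio r \<beta> < h_ratio r \<alpha>"
proof -
  have "0 < 1 + \<alpha> + (1 - \<alpha>/2) * r" "0 < 1 + \<beta> + (1 - \<beta>/2) * r"
    using assms by (simp_all add: add_pos_nonneg)
  moreover have "2 * (1 - \<alpha>/2) * r * (1 + \<beta> + (1 - \<beta>/2) * r)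
      - 2 * (1 - \<beta>/2) * r * (1 + \<alpha> + (1 - \<alpha>/2) * r) = 3 * r * (\<beta> - \<alpha>)"
    by (simp add: field_simps)
  moreover have "0 < 3 * r * (\<beta> - \<alpha>)"
    using assms by simp
  ultimately show ?thesis
    unfolding h_ratio_def by (simp add: divide_simps)
qed

lemma h_strict_mono_on:
  assumes "0 \<le> \<alpha>" "\<alpha> \<le> 1"
  shows "strict_mono_on {0<..} (\<lambda>r. h r \<alpha>)"
proof (rule strict_mono_onI)
  fix r s :: real
  assume "r \<in> {0<..}" "s \<in> {0<..}" "r < s"
  then have "0 < r" "r < s" by auto
  have "h_ratio r \<alpha> \<le> h_ratio s \<alpha>"
    using assms \<open>0 < r\<close> \<open>r < s\<close> by (intro h_ratio_mono) auto
  moreover have "r / (1 + r) \<le> s / (1 + s)"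
    using divide_affine_mono[of 1 1 r s] \<open>0 < r\<close> \<open>r < s\<close> by simp
  ultimately have "sqrt (h_ratio r \<alpha> + r / (1 + r)) \<le> sqrt (h_ratio s \<alpha> + s / (1 + s))"
    by (intro real_sqrt_le_mono) linarith
  moreover have "1 / (s^2 * (1 + s)) < 1 / (r^2 * (1 + r))"
    using \<open>0 < r\<close> \<open>r < s\<close> by (intro divide_strict_left_mono mult_strict_mono power_strict_mono) auto
  ultimately show "h r \<alpha> < h s \<alpha>"
    unfolding h_eq_h_ratio by linarith
qed

lemma h_strict_antimono_param:
  assumes "0 \<le> \<alpha>" "\<alpha> < \<beta>" "\<beta> \<le> 1" "0 < r"
  shows "h r \<beta> < h r \<alpha>"
proof -
  have "sqrt (h_ratio r \<beta> + r / (1 + r)) < sqrt (h_ratio r \<alpha> + r / (1 + r))"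
    using h_ratio_strict_antimono[OF assms] by (intro real_sqrt_less_mono) linarith
  then show ?thesis
    unfolding h_eq_h_ratio by linarith
qed

lemma h_neg_at_3_10:
  assumes "0 \<le> \<alpha>" "\<alpha> \<le> 1"
  shows "h (3/10) \<alpha> < 0"
proof -
  have "h (3/10) \<alpha> \<le> h (3/10) 0"
    using h_strict_antimono_param[of 0 \<alpha> "3/10"] assms by (cases "\<alpha> = 0") auto
  also have "h (3/10) 0 = 2 * sqrt (9/13) + 3 - 1000/117"
    unfolding h_def by (simp add: power2_eq_square)
  also have "\<dots> < 0"
    using real_sqrt_lt_1_iff[of "9/13"] by linarith
  finally show ?thesis .
qed

lemma h_pos_at_1:
  assumes "0 \<le> \<alpha>" "\<alpha> \<le> 1"
  shows "0 < h 1 \<alpha>"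
proof -
  have "0 \<le> h_ratio 1 \<alpha>"
    using h_ratio_mono[of \<alpha> 0 1] assms by (simp add: h_ratio_def)
  then have "0 \<le> sqrt (h_ratio 1 \<alpha> + 1 / (1 + 1))"
    by simp
  moreover have "h 1 \<alpha> = 2 * sqrt (h_ratio 1 \<alpha> + 1 / (1 + 1)) + 5/2"
    unfolding h_eq_h_ratio by simp
  ultimately show ?thesis
    by linarith
qed

lemma h_continuous_on:
  assumes "0 \<le> \<alpha>" "\<alpha> \<le> 1"
  shows "continuous_on {0<..} (\<lambda>r. h r \<alpha>)"
proof -
  have "1 + \<alpha> + (1 - \<alpha>/2) * r \<noteq> 0" if "0 < r" for r
  proof -
    have "0 \<le> (1 - \<alpha>/2) * r"
      using assms that by simp
    then show ?thesis
      using assms by linarith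
  qed
  then show ?thesis
    unfolding h_def by (intro continuous_intros) auto
qed

lemma h_ex1_root:
  assumes "0 \<le> \<alpha>" "\<alpha> \<le> 1"
  shows "\<exists>!r. r > 0 \<and> h r \<alpha> = 0"
proof -
  have "continuous_on {3/10..1} (\<lambda>r. h r \<alpha>)"
    using h_continuous_on[OF assms] by (rule continuous_on_subset) auto
  then obtain r where r: "3/10 \<le> r" "h r \<alpha> = 0"
    using IVT'[of "\<lambda>r. h r \<alpha>" "3/10" 0 1] h_neg_at_3_10[OF assms] h_pos_at_1[OF assms]
    by force
  have inj: "inj_on (\<lambda>r. h r \<alpha>) {0<..}"
    using h_strict_mono_on[OF assms] by (rule strict_mono_on_imp_inj_on)
  show ?thesis
  proof (rule ex1I[of _ r])
    show "r > 0 \<and> h r \<alpha> = 0"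
      using r by simp
  next
    fix s
    assume "s > 0 \<and> h s \<alpha> = 0"
    then show "s = r"
      using inj_onD[OF inj, of s r] r by simp
  qed
qed

lemma h_root_strict_mono_param:
  assumes "0 \<le> \<alpha>" "\<alpha> < \<beta>" "\<beta> \<le> 1"
    and "0 < r" "h r \<alpha> = 0" "0 < s" "h s \<beta> = 0"
  shows "r < s"
proof -
  have "h r \<alpha> < h s \<alpha>"
    using h_strict_antimono_param[of \<alpha> \<beta> s] assms by simp
  moreover have "strict_mono_on {0<..} (\<lambda>r. h r \<alpha>)"
    using assms by (intro h_strict_mono_on) auto
  ultimately show ?thesis
    using strict_mono_on_less[of "{0<..}" "\<lambda>r. h r \<alpha>" r s] assms by simp
qed

theorem lemma2p1:
  shows "(\<forall>\<alpha>::real. 0 < \<alpha> \<and> \<alpha> < 1 \<longrightarrow> (\<exists>!r::real. r > 0 \<and> h r \<alpha> = 0))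
       \<and> (\<exists>!r::real. r > 0 \<and> h r 0 = 0)
       \<and> (\<exists>!r::real. r > 0 \<and> h r 1 = 0)
       \<and> (\<forall>\<alpha> r0 ra r1 :: real. 0 < \<alpha> \<and> \<alpha> < 1
             \<and> r0 > 0 \<and> h r0 0 = 0 \<and> ra > 0 \<and> h ra \<alpha> = 0 \<and> r1 > 0 \<and> h r1 1 = 0
             \<longrightarrow> r0 < ra \<and> ra < r1)"
proof (intro conjI allI impI)
  fix \<alpha> :: real
  assume "0 < \<alpha> \<and> \<alpha> < 1"
  then show "\<exists>!r. r > 0 \<and> h r \<alpha> = 0"
    by (intro h_ex1_root) auto
next
  show "\<exists>!r. r > 0 \<and> h r 0 = 0" "\<exists>!r. r > 0 \<and> h r 1 = 0"
    by (simp_all add: h_ex1_root)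
next
  fix \<alpha> r0 ra r1 :: real
  assume "0 < \<alpha> \<and> \<alpha> < 1 \<and> r0 > 0 \<and> h r0 0 = 0 \<and> ra > 0 \<and> h ra \<alpha> = 0
    \<and> r1 > 0 \<and> h r1 1 = 0"
  then show "r0 < ra" "ra < r1"
    using h_root_strict_mono_param[of 0 \<alpha> r0 ra] h_root_strict_mono_param[of \<alpha> 1 ra r1]
    by simp_all
qed

end
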